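(* In the one-shot wage theft problem described in the context, for any effort level $a\in[0,1)$, the problem restricted to effort level $a$ has an optimal solution whose promised wages are $w_L^*(a)=\max\{0,\;u-aC'(a)+C(a)\}$ and $w_H^*(a)=w_L^*(a)+C'(a)=\max\{C'(a),\;u+(1-a)C'(a)+C(a)\}$. Further, if $a\in(0,1)$, then every optimal solution of the problem restricted to effort level $a$ has promised wages $w_L^*(a)$ and $w_H^*(a)$.
   Context: Fix $P>0$, $y_H>y_L\ge 0$, a real number $u$ (reservation utility) and $\gamma\in(0,1]$ (inspection probability). Let $C:[0,1)\to\mathbb{R}$ be the worker's effort cost: $C(0)=0$, $C$ increasing, strictly convex, twice differentiable, $C(a)\to\infty$ as $a\to1$. Let $\eta:[0,\infty)\to\mathbb{R}$ be the penalty: strictly convex, increasing, twice differentiable, $\eta(0)=0$. The one-shot wage theft problem is: choose $a,w_H,w_L,b_H,b_L$ to maximize the employer profit $a\,(Py_H-w_H+b_H-\gamma\eta(b_H))+(1-a)\,(Py_L-w_L+b_L-\gamma\eta(b_L))$ subject to (incentive compatibility) $a\in\arg\max_{a'\in[0,1)}\{a'w_H+(1-a')w_L-C(a')\}$; (individual rationality) $a w_H+(1-a)w_L-C(a)\ge u$; $w_H,w_L\ge 0$; $0\le b_L\le w_L$, $0\le b_H\le w_H$; $a\in[0,1)$. The problem restricted to effort level $a$ is the same problem with $a$ fixed. The principal's ideal wage theft $\beta\ge0$ is the value with $\gamma\eta'(\beta)=1$ (assumed to exist). *)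

theory Defs
  imports "HOL-Analysis.Analysis"
begin

definition strictly_convex_on :: "real set \<Rightarrow> (real \<Rightarrow> real) \<Rightarrow> bool" where
  "strictly_convex_on S f \<longleftrightarrow> convex S \<and>
     (\<forall>x\<in>S. \<forall>y\<in>S. \<forall>t. x \<noteq> y \<and> 0 < t \<and> t < 1 \<longrightarrow>
        f ((1 - t) * x + t * y) < (1 - t) * f x + t * f y)"

definition worker_payoff :: "(real \<Rightarrow> real) \<Rightarrow> real \<Rightarrow> real \<Rightarrow> real \<Rightarrow> real" where
  "worker_payoff C wH wL a' = a' * wH + (1 - a') * wL - C a'"

definition incentive_compatible :: "(real \<Rightarrow> real) \<Rightarrow> real \<Rightarrow> real \<Rightarrow> real \<Rightarrow> bool" where
  "incentive_compatible C a wH wL \<longleftrightarrow>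
     a \<in> {0..<1} \<and> (\<forall>a'\<in>{0..<1}. worker_payoff C wH wL a' \<le> worker_payoff C wH wL a)"

definition feasible :: "(real \<Rightarrow> real) \<Rightarrow> real \<Rightarrow> real \<Rightarrow> real \<Rightarrow> real \<Rightarrow> real \<Rightarrow> real \<Rightarrow> bool" where
  "feasible C u a wH wL bH bL \<longleftrightarrow>
     a \<in> {0..<1} \<and>
     incentive_compatible C a wH wL \<and>
     worker_payoff C wH wL a \<ge> u \<and>
     wH \<ge> 0 \<and> wL \<ge> 0 \<and>
     0 \<le> bL \<and> bL \<le> wL \<and> 0 \<le> bH \<and> bH \<le> wH"

definition profit :: "real \<Rightarrow> real \<Rightarrow> real \<Rightarrow> real \<Rightarrow> (real \<Rightarrow> real) \<Rightarrow>
    real \<Rightarrow> real \<Rightarrow> real \<Rightarrow> real \<Rightarrow> real \<Rightarrow> real" where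
  "profit P yH yL \<gamma> \<eta> a wH wL bH bL =
     a * (P * yH - wH + bH - \<gamma> * \<eta> bH) + (1 - a) * (P * yL - wL + bL - \<gamma> * \<eta> bL)"

definition optimal_at :: "real \<Rightarrow> real \<Rightarrow> real \<Rightarrow> real \<Rightarrow> (real \<Rightarrow> real) \<Rightarrow> (real \<Rightarrow> real) \<Rightarrow> real \<Rightarrow>
    real \<Rightarrow> real \<Rightarrow> real \<Rightarrow> real \<Rightarrow> real \<Rightarrow> bool" where
  "optimal_at P yH yL \<gamma> \<eta> C u a wH wL bH bL \<longleftrightarrow>
     feasible C u a wH wL bH bL \<and>
     (\<forall>wH' wL' bH' bL'. feasible C u a wH' wL' bH' bL' \<longrightarrow>
        profit P yH yL \<gamma> \<eta> a wH' wL' bH' bL' \<le> profit P yH yL \<gamma> \<eta> a wH wL bH bL)"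

end

theory Submission
  imports Defs
begin

text \<open>For a > 0 the worker's first-order condition pins the wage gap wH - wL to C'(a), and
  individual rationality then bounds wL below by max 0 (u - a C'(a) + C(a)); for a = 0 only this
  bound on wL remains. Conversely, C lies above its tangent at a, so the gap C'(a) is incentive
  compatible. Paying more than these least wages never helps the employer: theft from a higher
  wage is dominated by theft capped at the lower one, strictly so because \<eta> is strictly
  increasing. The optimal theft from a wage w is any maximiser of b - \<gamma> \<eta>(b) on [0, w], which
  exists by compactness.\<close>

lemma strictly_convex_on_imp_convex_on: "strictly_convex_on S f \<Longrightarrow> convex_on S f"
  unfolding strictly_convex_on_def by (intro convex_on_linorderI) (auto simp: less_imp_le)

lemma strictly_convex_onD:
  "strictly_convex_on S f \<Longrightarrow> x \<in> S \<Longrightarrow> y \<in> S \<Longrightarrow> x \<noteq> y \<Longrightarrow> 0 < t \<Longrightarrow> t < 1 \<Longrightarrow>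
    f ((1 - t) * x + t * y) < (1 - t) * f x + t * f y"
  by (simp add: strictly_convex_on_def)

lemma strictly_convex_on_mono_on_imp_strict_mono_on:
  fixes f :: "real \<Rightarrow> real"
  assumes mono: "mono_on S f" and strict: "strictly_convex_on S f"
  shows "strict_mono_on S f"
proof (rule strict_mono_onI)
  fix x y assume xy: "x \<in> S" "y \<in> S" "x < y"
  define z where "z = (x + y) / 2"
  have "z \<in> S"
    using strict xy convexD[of S x y "1/2" "1/2"]
    by (simp add: strictly_convex_on_def z_def add_divide_distrib)
  then have "f x \<le> f z"
    using mono xy by (auto simp: z_def intro: mono_onD)
  moreover have "f z < f x / 2 + f y / 2"
    using strictly_convex_onD[OF strict, of x y "1/2"] xy by (simp add: z_def add_divide_distrib)
  ultimately show "f x < f y" by linarith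
qed

lemma has_real_derivative_within_le_slope_bound:
  assumes "(f has_real_derivative D) (at x within S)" "at x within S \<noteq> bot"
    and "\<And>y. y \<in> S \<Longrightarrow> y \<noteq> x \<Longrightarrow> (f y - f x) / (y - x) \<le> B"
  shows "D \<le> B"
  using assms unfolding has_field_derivative_iff
  by (intro tendsto_upperbound) (auto simp: eventually_at_filter)

lemma mono_on_has_real_derivative_nonneg:
  fixes f :: "real \<Rightarrow> real"
  assumes mono: "mono_on S f" and "x \<in> S"
    and "(f has_real_derivative D) (at x within S)" "at x within S \<noteq> bot"
  shows "0 \<le> D"
proof -
  have "0 \<le> (f y - f x) / (y - x)" if "y \<in> S" "y \<noteq> x" for y
    using that \<open>x \<in> S\<close> mono_onD[OF mono, of x y] mono_onD[OF mono, of y x]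
    by (cases "x < y") (auto simp: zero_le_divide_iff)
  then show ?thesis
    using assms unfolding has_field_derivative_iff
    by (intro tendsto_lowerbound) (auto simp: eventually_at_filter)
qed

lemma convex_on_above_tangent_within:
  fixes f :: "real \<Rightarrow> real"
  assumes cvx: "convex_on S f" and "x \<in> S" "y \<in> S"
    and der: "(f has_real_derivative D) (at x within S)"
  shows "f x + D * (y - x) \<le> f y"
proof -
  define g where "g t = x + t * (y - x)" for t
  have g_segment: "g t = (1 - t) *\<^sub>R x + t *\<^sub>R y" for t
    by (simp add: g_def algebra_simps)
  have "g ` {0..1} \<subseteq> S"
    using convexD_alt[OF convex_on_imp_convex[OF cvx] \<open>x \<in> S\<close> \<open>y \<in> S\<close>]
    by (auto simp: g_segment)
  moreover have "g 0 = x" by (simp add: g_def)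
  ultimately have "(f has_real_derivative D) (at (g 0) within g ` {0..1})"
    using der by (auto intro: DERIV_subset)
  moreover have "(g has_real_derivative y - x) (at 0 within {0..1})"
    unfolding g_def by (auto intro!: derivative_eq_intros)
  ultimately have "(f \<circ> g has_real_derivative D * (y - x)) (at 0 within {0..1})"
    by (rule DERIV_image_chain)
  moreover have "at (0::real) within {0..1} \<noteq> bot"
    by (simp add: at_within_Icc_at_right)
  moreover have "((f \<circ> g) t - (f \<circ> g) 0) / (t - 0) \<le> f y - f x" if "t \<in> {0..1}" "t \<noteq> 0" for t
  proof -
    have "f (g t) \<le> (1 - t) * f x + t * f y"
      using convex_onD[OF cvx, of t x y] that \<open>x \<in> S\<close> \<open>y \<in> S\<close> by (simp add: g_segment)
    then have "f (g t) - f (g 0) \<le> t * (f y - f x)"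
      using \<open>g 0 = x\<close> by (simp add: algebra_simps)
    then show ?thesis
      using that by (simp add: pos_divide_le_eq mult.commute)
  qed
  ultimately have "D * (y - x) \<le> f y - f x"
    by (rule has_real_derivative_within_le_slope_bound)
  then show ?thesis by simp
qed

lemma has_real_derivative_within_interior_max_eq_0:
  fixes f :: "real \<Rightarrow> real"
  assumes der: "(f has_real_derivative D) (at x within S)" and "x \<in> interior S"
    and max: "\<And>y. y \<in> S \<Longrightarrow> f y \<le> f x"
  shows "D = 0"
proof -
  obtain e where "e > 0" and ball: "ball x e \<subseteq> S"
    using \<open>x \<in> interior S\<close> by (auto simp: mem_interior)
  show ?thesis
  proof (rule DERIV_local_max)
    show "DERIV f x :> D"
      using der at_within_interior[OF \<open>x \<in> interior S\<close>] by simp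
    show "\<forall>y. \<bar>x - y\<bar> < e \<longrightarrow> f y \<le> f x"
      using ball max by (auto simp: dist_real_def subset_iff)
  qed fact
qed

lemma at_within_atLeastLessThan_neq_bot:
  fixes a l r :: real
  assumes "a \<in> {l..<r}"
  shows "at a within {l..<r} \<noteq> bot"
proof -
  have "a \<in> closure {a<..<r}"
    using assms by simp
  also have "closure {a<..<r} \<subseteq> closure ({l..<r} - {a})"
    using assms by (intro closure_mono) auto
  finally show ?thesis by (simp add: at_within_eq_bot_iff)
qed

lemma incentive_compatible_if_wage_gap_eq_marginal_cost:
  assumes "convex_on {0..<1} C" "a \<in> {0..<1}"
    and "(C has_real_derivative c) (at a within {0..<1})"
  shows "incentive_compatible C a (wL + c) wL"
  using assms convex_on_above_tangent_within[OF assms(1,2) _ assms(3)]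
  by (auto simp: incentive_compatible_def worker_payoff_def algebra_simps)

lemma incentive_compatible_imp_wage_gap_eq_marginal_cost:
  assumes ic: "incentive_compatible C a wH wL" and "0 < a"
    and der: "(C has_real_derivative c) (at a within {0..<1})"
  shows "wH = wL + c"
proof -
  have "wH - wL - c = 0"
  proof (rule has_real_derivative_within_interior_max_eq_0)
    show "(worker_payoff C wH wL has_real_derivative wH - wL - c) (at a within {0..<1})"
      unfolding worker_payoff_def by (auto intro!: derivative_eq_intros der)
    show "a \<in> interior {0..<1}"
      using ic \<open>0 < a\<close> by (simp add: incentive_compatible_def)
    show "worker_payoff C wH wL y \<le> worker_payoff C wH wL a" if "y \<in> {0..<1}" for y
      using ic that by (simp add: incentive_compatible_def)
  qed
  then show ?thesis by simp
qed

lemma feasible_imp_wages_ge: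
  assumes feas: "feasible C u a wH wL bH bL"
    and der: "(C has_real_derivative c) (at a within {0..<1})"
  shows "max 0 (u - a * c + C a) \<le> wL" and "0 < a \<Longrightarrow> wH = wL + c"
proof -
  have ic: "incentive_compatible C a wH wL" and ir: "u \<le> a * wH + (1 - a) * wL - C a"
    using feas by (auto simp: feasible_def worker_payoff_def)
  show gap: "wH = wL + c" if "0 < a"
    using incentive_compatible_imp_wage_gap_eq_marginal_cost[OF ic that der] .
  have "u - a * c + C a \<le> wL"
  proof (cases "a = 0")
    case False
    with feas have "0 < a" by (simp add: feasible_def)
    then show ?thesis using ir gap by (simp add: algebra_simps)
  qed (use ir in simp)
  then show "max 0 (u - a * c + C a) \<le> wL"
    using feas by (simp add: feasible_def)
qed

lemma feasible_if_wages_ge: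
  assumes "convex_on {0..<1} C" "a \<in> {0..<1}"
    and "(C has_real_derivative c) (at a within {0..<1})" "0 \<le> c"
    and "max 0 (u - a * c + C a) \<le> wL"
    and "bH \<in> {0..wL + c}" "bL \<in> {0..wL}"
  shows "feasible C u a (wL + c) wL bH bL"
proof -
  have "incentive_compatible C a (wL + c) wL"
    using assms(1-3) by (rule incentive_compatible_if_wage_gap_eq_marginal_cost)
  with assms show ?thesis
    by (auto simp: feasible_def worker_payoff_def algebra_simps)
qed

definition optimal_theft :: "real \<Rightarrow> (real \<Rightarrow> real) \<Rightarrow> real \<Rightarrow> real \<Rightarrow> bool" where
  "optimal_theft \<gamma> \<eta> w b \<longleftrightarrow> b \<in> {0..w} \<and> (\<forall>b'\<in>{0..w}. b' - \<gamma> * \<eta> b' \<le> b - \<gamma> * \<eta> b)"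

lemma optimal_theft_exists:
  assumes "continuous_on {0..w} \<eta>" "0 \<le> w"
  shows "\<exists>b. optimal_theft \<gamma> \<eta> w b"
proof -
  have "continuous_on {0..w} (\<lambda>b. b - \<gamma> * \<eta> b)"
    using assms(1) by (intro continuous_intros)
  then have "\<exists>b\<in>{0..w}. \<forall>b'\<in>{0..w}. b' - \<gamma> * \<eta> b' \<le> b - \<gamma> * \<eta> b"
    using assms(2) by (intro continuous_attains_sup) auto
  then show ?thesis by (auto simp: optimal_theft_def)
qed

lemma optimal_theft_dominates:
  assumes \<eta>: "strict_mono_on {0..} \<eta>" and "0 < \<gamma>"
    and opt: "optimal_theft \<gamma> \<eta> w0 b0" and "w0 \<le> w" "b \<in> {0..w}"
  shows "b - w - \<gamma> * \<eta> b \<le> b0 - w0 - \<gamma> * \<eta> b0"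
    and "w0 < w \<Longrightarrow> b - w - \<gamma> * \<eta> b < b0 - w0 - \<gamma> * \<eta> b0"
proof -
  have "0 \<le> w0" using opt by (simp add: optimal_theft_def)
  have capped: "b - w - \<gamma> * \<eta> b \<le> min b w0 - w0 - \<gamma> * \<eta> (min b w0)
      \<and> (w0 < w \<longrightarrow> b - w - \<gamma> * \<eta> b < min b w0 - w0 - \<gamma> * \<eta> (min b w0))"
  proof (cases "b \<le> w0")
    case False
    then have "\<gamma> * \<eta> w0 < \<gamma> * \<eta> b"
      using \<eta> \<open>0 \<le> w0\<close> \<open>0 < \<gamma>\<close> by (auto intro: strict_mono_onD)
    moreover have "min b w0 = w0"
      using False by simp
    ultimately show ?thesis
      using \<open>b \<in> {0..w}\<close> by simp
  qed (simp add: \<open>w0 \<le> w\<close> min_def)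
  moreover have "min b w0 - \<gamma> * \<eta> (min b w0) \<le> b0 - \<gamma> * \<eta> b0"
    using opt \<open>0 \<le> w0\<close> \<open>b \<in> {0..w}\<close> by (simp add: optimal_theft_def)
  ultimately show "b - w - \<gamma> * \<eta> b \<le> b0 - w0 - \<gamma> * \<eta> b0"
    and "w0 < w \<Longrightarrow> b - w - \<gamma> * \<eta> b < b0 - w0 - \<gamma> * \<eta> b0"
    by linarith+
qed

lemma profit_le_with_optimal_theft:
  assumes \<eta>: "strict_mono_on {0..} \<eta>" and "0 < \<gamma>" and a: "a \<in> {0..<1}"
    and optH: "optimal_theft \<gamma> \<eta> wH0 bH0" and optL: "optimal_theft \<gamma> \<eta> wL0 bL0"
    and "bH \<in> {0..wH}" "bL \<in> {0..wL}" and "wL0 \<le> wL" and "0 < a \<Longrightarrow> wH0 \<le> wH"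
  shows "profit P yH yL \<gamma> \<eta> a wH wL bH bL \<le> profit P yH yL \<gamma> \<eta> a wH0 wL0 bH0 bL0"
    and "wL0 < wL \<Longrightarrow>
      profit P yH yL \<gamma> \<eta> a wH wL bH bL < profit P yH yL \<gamma> \<eta> a wH0 wL0 bH0 bL0"
proof -
  have high: "a * (P * yH - wH + bH - \<gamma> * \<eta> bH) \<le> a * (P * yH - wH0 + bH0 - \<gamma> * \<eta> bH0)"
  proof (cases "a = 0")
    case False
    with a have "0 < a" by simp
    with assms have "bH - wH - \<gamma> * \<eta> bH \<le> bH0 - wH0 - \<gamma> * \<eta> bH0"
      by (intro optimal_theft_dominates(1)[OF \<eta> \<open>0 < \<gamma>\<close> optH]) auto
    with \<open>0 < a\<close> show ?thesis by (intro mult_left_mono) auto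
  qed simp
  have "0 < 1 - a" using a by simp
  have low: "bL - wL - \<gamma> * \<eta> bL \<le> bL0 - wL0 - \<gamma> * \<eta> bL0"
    "wL0 < wL \<Longrightarrow> bL - wL - \<gamma> * \<eta> bL < bL0 - wL0 - \<gamma> * \<eta> bL0"
    using optimal_theft_dominates[OF \<eta> \<open>0 < \<gamma>\<close> optL] assms by auto
  show "profit P yH yL \<gamma> \<eta> a wH wL bH bL \<le> profit P yH yL \<gamma> \<eta> a wH0 wL0 bH0 bL0"
    using high mult_left_mono[OF low(1), of "1 - a"] \<open>0 < 1 - a\<close>
    unfolding profit_def by (simp add: algebra_simps)
  show "profit P yH yL \<gamma> \<eta> a wH wL bH bL < profit P yH yL \<gamma> \<eta> a wH0 wL0 bH0 bL0"
    if "wL0 < wL"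
    using high mult_strict_left_mono[OF low(2)[OF that] \<open>0 < 1 - a\<close>]
    unfolding profit_def by (simp add: algebra_simps)
qed

lemma least_wages_optimal_at:
  fixes C :: "real \<Rightarrow> real" and a c u :: real
  defines "wL0 \<equiv> max 0 (u - a * c + C a)"
  assumes "convex_on {0..<1} C" and a: "a \<in> {0..<1}"
    and der: "(C has_real_derivative c) (at a within {0..<1})" and "0 \<le> c"
    and \<eta>: "strict_mono_on {0..} \<eta>" and "0 < \<gamma>"
    and optH: "optimal_theft \<gamma> \<eta> (wL0 + c) bH" and optL: "optimal_theft \<gamma> \<eta> wL0 bL"
  shows "optimal_at P yH yL \<gamma> \<eta> C u a (wL0 + c) wL0 bH bL"
    and "0 < a \<Longrightarrow> optimal_at P yH yL \<gamma> \<eta> C u a wH wL bH' bL' \<Longrightarrow> wL = wL0 \<and> wH = wL0 + c"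
proof -
  have feas: "feasible C u a (wL0 + c) wL0 bH bL"
    using assms by (intro feasible_if_wages_ge) (auto simp: optimal_theft_def)
  have dominated:
    "profit P yH yL \<gamma> \<eta> a wH wL bH' bL' \<le> profit P yH yL \<gamma> \<eta> a (wL0 + c) wL0 bH bL
      \<and> (wL0 < wL \<longrightarrow>
          profit P yH yL \<gamma> \<eta> a wH wL bH' bL' < profit P yH yL \<gamma> \<eta> a (wL0 + c) wL0 bH bL)"
    if "feasible C u a wH wL bH' bL'" for wH wL bH' bL'
    using profit_le_with_optimal_theft[OF \<eta> \<open>0 < \<gamma>\<close> a optH optL]
      feasible_imp_wages_ge[OF that der] that
    by (auto simp: feasible_def wL0_def)
  show "optimal_at P yH yL \<gamma> \<eta> C u a (wL0 + c) wL0 bH bL"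
    using feas dominated by (simp add: optimal_at_def)
  show "wL = wL0 \<and> wH = wL0 + c"
    if "0 < a" and opt: "optimal_at P yH yL \<gamma> \<eta> C u a wH wL bH' bL'"
  proof -
    have feas': "feasible C u a wH wL bH' bL'"
      and "profit P yH yL \<gamma> \<eta> a (wL0 + c) wL0 bH bL \<le> profit P yH yL \<gamma> \<eta> a wH wL bH' bL'"
      using opt feas by (auto simp: optimal_at_def)
    then have "\<not> wL0 < wL"
      using dominated by fastforce
    moreover have "wL0 \<le> wL" "wH = wL + c"
      using feasible_imp_wages_ge[OF feas' der] \<open>0 < a\<close> by (auto simp: wL0_def)
    ultimately show ?thesis by simp
  qed
qed

theorem proposition2:
  fixes P yH yL u \<gamma> :: real
    and C dC ddC :: "real \<Rightarrow> real"
    and \<eta> d\<eta> dd\<eta> :: "real \<Rightarrow> real"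
    and a :: real
  assumes P_pos: "P > 0"
    and y_order: "yH > yL" "yL \<ge> 0"
    and gamma: "0 < \<gamma>" "\<gamma> \<le> 1"
    and C0: "C 0 = 0"
    and C_mono: "mono_on {0..<1} C"
    and C_sconv: "strictly_convex_on {0..<1} C"
    and C_deriv: "\<And>x. x \<in> {0..<1} \<Longrightarrow> (C has_real_derivative dC x) (at x within {0..<1})"
    and C_deriv2: "\<And>x. x \<in> {0..<1} \<Longrightarrow> (dC has_real_derivative ddC x) (at x within {0..<1})"
    and C_infty: "filterlim C at_top (at_left 1)"
    and eta0: "\<eta> 0 = 0"
    and eta_mono: "mono_on {0..} \<eta>"
    and eta_sconv: "strictly_convex_on {0..} \<eta>"
    and eta_deriv: "\<And>x. x \<ge> 0 \<Longrightarrow> (\<eta> has_real_derivative d\<eta> x) (at x within {0..})"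
    and eta_deriv2: "\<And>x. x \<ge> 0 \<Longrightarrow> (d\<eta> has_real_derivative dd\<eta> x) (at x within {0..})"
    and beta_ex: "\<exists>\<beta>\<ge>0. \<gamma> * d\<eta> \<beta> = 1"
    and a_range: "a \<in> {0..<1}"
  shows "max 0 (u - a * dC a + C a) + dC a = max (dC a) (u + (1 - a) * dC a + C a)
     \<and> (\<exists>bH bL. optimal_at P yH yL \<gamma> \<eta> C u a
            (max 0 (u - a * dC a + C a) + dC a) (max 0 (u - a * dC a + C a)) bH bL)
     \<and> (0 < a \<longrightarrow>
          (\<forall>wH wL bH bL. optimal_at P yH yL \<gamma> \<eta> C u a wH wL bH bL \<longrightarrow>
             wL = max 0 (u - a * dC a + C a) \<and> wH = max 0 (u - a * dC a + C a) + dC a))"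
proof -
  define wL0 where "wL0 = max 0 (u - a * dC a + C a)"
  have der: "(C has_real_derivative dC a) (at a within {0..<1})"
    using a_range by (rule C_deriv)
  have "0 \<le> dC a"
    using C_mono a_range der at_within_atLeastLessThan_neq_bot[OF a_range]
    by (rule mono_on_has_real_derivative_nonneg)
  have "continuous_on {0..} \<eta>"
    using eta_deriv by (auto simp: continuous_on_eq_continuous_within intro: DERIV_continuous)
  then obtain bH bL where optH: "optimal_theft \<gamma> \<eta> (wL0 + dC a) bH"
    and optL: "optimal_theft \<gamma> \<eta> wL0 bL"
    using optimal_theft_exists[of "wL0 + dC a" \<eta> \<gamma>] optimal_theft_exists[of wL0 \<eta> \<gamma>] \<open>0 \<le> dC a\<close>
    by (force simp: wL0_def intro: continuous_on_subset)
  have C_convex: "convex_on {0..<1} C"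
    using C_sconv by (rule strictly_convex_on_imp_convex_on)
  have eta_strict: "strict_mono_on {0..} \<eta>"
    using eta_mono eta_sconv by (rule strictly_convex_on_mono_on_imp_strict_mono_on)
  note least_wages = least_wages_optimal_at[where u = u,
      OF C_convex a_range der \<open>0 \<le> dC a\<close> eta_strict gamma(1), folded wL0_def, OF optH optL]
  have "wL0 + dC a = max (dC a) (u + (1 - a) * dC a + C a)"
    by (simp add: wL0_def max_def algebra_simps)
  then show ?thesis
    using least_wages unfolding wL0_def by blast
qed

end
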